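(* Fix a nonnegative integer $n$ and define \[ \widetilde{T}_n(a,c)=(1+a-c)_n(c)_n\,{}_3F_2\!\left(\left.{-n,\frac{a}{2},\frac{a+1}{2} \atop 1+a-c,c}\right| 4\right). \] Then, whenever both sides are defined, \[ {}_3F_2\!\left(\left.{-n,\frac{a}{2},\frac{a+1}{2} \atop 1+a-c,c}\right| 4\right) =\frac{(-1)^n(a)_n}{(1+a-c)_n}\,{}_3F_2\!\left(\left.{-n,\frac{c-a-n}{2},\frac{c-a-n+1}{2} \atop 1-a-n,c}\right| 4\right), \] so $\widetilde{T}_n(a,c)=\widetilde{T}_n(c-a-n,c)$. The group of transformations of $(a,c)$ generated by $(a,c)\mapsto(a,1+a-c)$ and $(a,c)\mapsto(c-a-n,c)$ is isomorphic to $S_3$ and yields the six invariances $\widetilde{T}_n(a,c)=\widetilde{T}_n(a,c)=\widetilde{T}_n(a,1+a-c)=\widetilde{T}_n(c-a-n,c)=\widetilde{T}_n(c-a-n,1-a-n)=\widetilde{T}_n(1-c-n,1+a-c)=\widetilde{T}_n(1-c-n,1-a-n)$. Moreover, the function \[ \widetilde{U}_n(x,y,z)=\widetilde{T}_n\!\left(\frac{1+2x-y-z-2n}{3},\frac{2+x+y-2z-n}{3}\right) \] is invariant under all six permutations of $x,y,z$.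
   Context: For $a\in\mathbb{C}$, $(a)_0=1$ and $(a)_k=a(a+1)\cdots(a+k-1)$ for $k\ge1$. The hypergeometric series is ${}_rF_s\!\left(\left.{\alpha_1,\ldots,\alpha_r\atop \beta_1,\ldots,\beta_s}\right|z\right)=\sum_{k\ge0}\frac{(\alpha_1)_k\cdots(\alpha_r)_k}{k!(\beta_1)_k\cdots(\beta_s)_k}z^k$, with no lower parameter zero or a negative integer; when an upper parameter is $-n$ it is a finite sum over $0\le k\le n$. *)

theory Defs
  imports Complex_Main "HOL-Algebra.Sym_Groups" "HOL-Algebra.Bij" "HOL-Algebra.Generated_Groups"
begin

definition lower_ok :: "complex \<Rightarrow> bool" where
  "lower_ok b \<longleftrightarrow> (\<forall>m::nat. b \<noteq> - of_nat m)"

definition F32 :: "nat \<Rightarrow> complex \<Rightarrow> complex \<Rightarrow> complex \<Rightarrow> complex \<Rightarrow> complex \<Rightarrow> complex" where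
  "F32 n a1 a2 b1 b2 z = (\<Sum>k\<le>n. pochhammer (- of_nat n) k * pochhammer a1 k * pochhammer a2 k
       / (fact k * pochhammer b1 k * pochhammer b2 k) * z ^ k)"

text \<open>T~_n(a,c) = (1+a-c)_n (c)_n 3F2(-n,a/2,(a+1)/2;1+a-c,c;4), with denominators cleared,
  i.e. its polynomial extension in (a,c) (using (b)_n/(b)_k = (b+k)_(n-k)).\<close>
definition Tt :: "nat \<Rightarrow> complex \<Rightarrow> complex \<Rightarrow> complex" where
  "Tt n a c = (\<Sum>k\<le>n. pochhammer (- of_nat n) k * pochhammer (a/2) k * pochhammer ((a+1)/2) k
       / fact k * pochhammer (1 + a - c + of_nat k) (n - k) * pochhammer (c + of_nat k) (n - k) * 4 ^ k)"

definition Ut :: "nat \<Rightarrow> complex \<Rightarrow> complex \<Rightarrow> complex \<Rightarrow> complex" where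
  "Ut n x y z = Tt n ((1 + 2*x - y - z - 2 * of_nat n) / 3) ((2 + x + y - 2*z - of_nat n) / 3)"

definition sig1 :: "complex \<times> complex \<Rightarrow> complex \<times> complex" where
  "sig1 = (\<lambda>(a, c). (a, 1 + a - c))"

definition sig2 :: "nat \<Rightarrow> complex \<times> complex \<Rightarrow> complex \<times> complex" where
  "sig2 n = (\<lambda>(a, c). (c - a - of_nat n, c))"

end

theory Submission
  imports Defs
begin

(* Writing q = c - a - n, the k-th summand of Tt n a c is
   (-1)^n C(n,k) (a)_(2k) (q)_(n-k) (a + q + n + k)_(n-k). Expanding the last factor by the
   Vandermonde identity for rising factorials turns Tt n a c into (-1)^n times a trinomial sum
   that is symmetric in a and q, and a -> c - a - n exchanges a and q.
   The maps sig1 and sig2 n act on the three lower parameters 1 + a - c, c and 1 - a - n,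
   which sum to 2 - n, as the transpositions (1 2) and (1 3); so they generate a faithful
   copy of S_3 permuting these parameters. *)

lemma pochhammer_half_product:
  fixes z :: "'a::field_char_0"
  shows "pochhammer (z/2) k * pochhammer ((z+1)/2) k * 4^k = pochhammer z (2*k)"
proof -
  have "(4::'a)^k = of_nat (2^(2*k))"
    by (simp add: power_mult)
  then show ?thesis
    using pochhammer_double[of "z/2" k] by (simp add: add_divide_distrib mult_ac)
qed

lemma pochhammer_minus_of_nat_div_fact:
  "pochhammer (- of_nat n) k / fact k = ((-1)^k * of_nat (n choose k) :: 'a::field_char_0)"
  by (simp add: binomial_gbinomial gbinomial_pochhammer)

(* With i = n - k - j the exponents are 2k + i and 2j + i, and the coefficient is n!/(i! j! k!). *)
definition trinomial_pochhammer_sum :: "nat \<Rightarrow> 'a::comm_ring_1 \<Rightarrow> 'a \<Rightarrow> 'a" where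
  "trinomial_pochhammer_sum n p q = (\<Sum>(k, j) \<in> {(k, j). k + j \<le> n}.
     of_nat ((n choose k) * ((n - k) choose j)) * pochhammer p (n + k - j) * pochhammer q (n + j - k))"

lemma choose_mult_commute:
  assumes "k + j \<le> n"
  shows "(n choose k) * ((n - k) choose j) = (n choose j) * ((n - j) choose k)"
proof -
  have "(n choose k) * ((n - k) choose j) = (n choose (k + j)) * ((k + j) choose k)"
    using choose_mult[of k "k + j" n] assms by simp
  also have "\<dots> = (n choose j) * ((n - j) choose k)"
    using choose_mult[of j "k + j" n] assms binomial_symmetric[of k "k + j"] by (simp add: add.commute)
  finally show ?thesis .
qed

lemma trinomial_pochhammer_sum_commute:
  "trinomial_pochhammer_sum n p q = trinomial_pochhammer_sum n q p"
  unfolding trinomial_pochhammer_sum_def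
  by (rule sum.reindex_bij_witness[where i = prod.swap and j = prod.swap])
    (auto simp: choose_mult_commute mult_ac simp del: of_nat_mult)

lemma pochhammer_product_expand:
  fixes p q :: "'a::comm_ring_1"
  assumes "k \<le> n"
  shows "pochhammer p (2*k) * pochhammer q (n - k) * pochhammer (p + q + of_nat (n + k)) (n - k)
    = (\<Sum>j\<le>n-k. of_nat ((n - k) choose j) * pochhammer p (n + k - j) * pochhammer q (n + j - k))"
proof -
  have "p + q + of_nat (n + k) = (q + of_nat (n - k)) + (p + of_nat (2*k))"
    using assms by (simp add: of_nat_diff algebra_simps)
  then have "pochhammer (p + q + of_nat (n + k)) (n - k) = (\<Sum>j\<le>n-k. of_nat ((n - k) choose j)
      * pochhammer (q + of_nat (n - k)) j * pochhammer (p + of_nat (2*k)) (n - k - j))"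
    by (simp only: pochhammer_binomial_sum)
  then have "pochhammer p (2*k) * pochhammer q (n - k) * pochhammer (p + q + of_nat (n + k)) (n - k)
      = (\<Sum>j\<le>n-k. of_nat ((n - k) choose j)
          * (pochhammer p (2*k) * pochhammer (p + of_nat (2*k)) (n - k - j))
          * (pochhammer q (n - k) * pochhammer (q + of_nat (n - k)) j))"
    by (simp add: sum_distrib_left mult_ac)
  also have "\<dots> = (\<Sum>j\<le>n-k. of_nat ((n - k) choose j) * pochhammer p (n + k - j) * pochhammer q (n + j - k))"
  proof (rule sum.cong [OF refl])
    fix j
    assume "j \<in> {..n-k}"
    then have "n + k - j = 2*k + (n - k - j)" and "n + j - k = (n - k) + j"
      using assms by auto
    then show "of_nat ((n - k) choose j)
          * (pochhammer p (2*k) * pochhammer (p + of_nat (2*k)) (n - k - j))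
          * (pochhammer q (n - k) * pochhammer (q + of_nat (n - k)) j)
        = of_nat ((n - k) choose j) * pochhammer p (n + k - j) * pochhammer q (n + j - k)"
      by (simp only: pochhammer_product')
  qed
  finally show ?thesis .
qed

lemma trinomial_pochhammer_sum_expand:
  "trinomial_pochhammer_sum n p q = (\<Sum>k\<le>n. of_nat (n choose k)
     * pochhammer p (2*k) * pochhammer q (n - k) * pochhammer (p + q + of_nat (n + k)) (n - k))"
proof -
  have "{(k, j). k + j \<le> n} = Sigma {..n} (\<lambda>k. {..n - k})"
    by auto
  then have "trinomial_pochhammer_sum n p q = (\<Sum>k\<le>n. \<Sum>j\<le>n-k. of_nat (n choose k)
      * (of_nat ((n - k) choose j) * pochhammer p (n + k - j) * pochhammer q (n + j - k)))"
    unfolding trinomial_pochhammer_sum_def by (simp add: sum.Sigma mult_ac)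
  also have "\<dots> = (\<Sum>k\<le>n. of_nat (n choose k)
     * (pochhammer p (2*k) * pochhammer q (n - k) * pochhammer (p + q + of_nat (n + k)) (n - k)))"
    by (intro sum.cong refl) (simp only: atMost_iff pochhammer_product_expand sum_distrib_left)
  finally show ?thesis
    by (simp only: mult.assoc)
qed

lemma Tt_summand:
  fixes a c :: complex
  assumes "k \<le> n"
  shows "pochhammer (- of_nat n) k * pochhammer (a/2) k * pochhammer ((a+1)/2) k / fact k
      * pochhammer (1 + a - c + of_nat k) (n - k) * pochhammer (c + of_nat k) (n - k) * 4^k
    = (-1)^n * (of_nat (n choose k) * pochhammer a (2*k) * pochhammer (c - a - of_nat n) (n - k)
      * pochhammer (a + (c - a - of_nat n) + of_nat (n + k)) (n - k))"
    (is "?summand = _")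
proof -
  have "pochhammer (1 + a - c + of_nat k) (n - k) = (-1)^(n - k) * pochhammer (c - a - of_nat n) (n - k)"
    using pochhammer_minus'[of "a - c + of_nat n" "n - k"] assms by (simp add: of_nat_diff algebra_simps)
  then have "?summand = ((-1)^k * of_nat (n choose k)) * pochhammer a (2*k)
      * ((-1)^(n - k) * pochhammer (c - a - of_nat n) (n - k)) * pochhammer (c + of_nat k) (n - k)"
    by (simp add: pochhammer_half_product [symmetric] pochhammer_minus_of_nat_div_fact [symmetric])
  also have "\<dots> = (-1)^n * (of_nat (n choose k) * pochhammer a (2*k)
      * pochhammer (c - a - of_nat n) (n - k) * pochhammer (a + (c - a - of_nat n) + of_nat (n + k)) (n - k))"
    using assms by (simp add: mult_ac flip: power_add)
  finally show ?thesis .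
qed

lemma Tt_eq_trinomial_pochhammer_sum:
  "Tt n a c = (-1)^n * trinomial_pochhammer_sum n a (c - a - of_nat n)"
  unfolding trinomial_pochhammer_sum_expand Tt_def sum_distrib_left
  by (rule sum.cong [OF refl], rule Tt_summand) simp

lemma Tt_transformation: "Tt n (c - a - of_nat n) c = Tt n a c"
proof -
  have "c - (c - a - of_nat n) - of_nat n = a"
    by simp
  then show ?thesis
    by (simp add: Tt_eq_trinomial_pochhammer_sum trinomial_pochhammer_sum_commute)
qed

lemma Tt_lower_param_swap: "Tt n a (1 + a - c) = Tt n a c"
  unfolding Tt_def by (simp add: algebra_simps)

lemma pochhammer_lower_ok_nonzero: "lower_ok b \<Longrightarrow> pochhammer b m \<noteq> 0"
  unfolding lower_ok_def by (auto simp: pochhammer_eq_0_iff)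

lemma pochhammer_shift_eq_div:
  fixes b :: "'a::field"
  assumes "pochhammer b k \<noteq> 0" and "k \<le> n"
  shows "pochhammer (b + of_nat k) (n - k) = pochhammer b n / pochhammer b k"
  using assms by (simp add: pochhammer_product[of k n b])

lemma Tt_eq_F32:
  assumes "lower_ok (1 + a - c)" and "lower_ok c"
  shows "Tt n a c = pochhammer (1 + a - c) n * pochhammer c n * F32 n (a/2) ((a+1)/2) (1 + a - c) c 4"
  unfolding Tt_def F32_def sum_distrib_left
  using assms
  by (intro sum.cong refl)
    (simp only: atMost_iff pochhammer_shift_eq_div pochhammer_lower_ok_nonzero not_False_eq_True,
      simp add: pochhammer_lower_ok_nonzero field_simps)

lemma F32_transformation:
  assumes "lower_ok (1 + a - c)" and "lower_ok c" and "lower_ok (1 - a - of_nat n)"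
  shows "F32 n (a/2) ((a+1)/2) (1 + a - c) c 4
    = (-1)^n * pochhammer a n / pochhammer (1 + a - c) n
      * F32 n ((c - a - of_nat n)/2) ((c - a - of_nat n + 1)/2) (1 - a - of_nat n) c 4"
    (is "?F = ?G")
proof -
  have lower: "1 + (c - a - of_nat n) - c = 1 - a - of_nat n"
    by simp
  have nonzero: "pochhammer (1 + a - c) n \<noteq> 0" "pochhammer c n \<noteq> 0"
    using assms by (simp_all add: pochhammer_lower_ok_nonzero)
  then have "pochhammer (1 + a - c) n * pochhammer c n \<noteq> 0"
    by simp
  have "pochhammer (1 + a - c) n * pochhammer c n * ?F = Tt n a c"
    using Tt_eq_F32 assms(1,2) by simp
  also have "\<dots> = Tt n (c - a - of_nat n) c"
    by (simp only: Tt_transformation)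
  also have "\<dots> = pochhammer (1 - a - of_nat n) n * pochhammer c n
      * F32 n ((c - a - of_nat n)/2) ((c - a - of_nat n + 1)/2) (1 - a - of_nat n) c 4"
    using Tt_eq_F32[of "c - a - of_nat n" c n, unfolded lower] assms(2,3) by blast
  also have "\<dots> = pochhammer (1 + a - c) n * pochhammer c n * ?G"
    using pochhammer_minus'[of "-a" n] nonzero by (simp add: field_simps)
  finally show ?thesis
    using \<open>pochhammer (1 + a - c) n * pochhammer c n \<noteq> 0\<close> by (metis mult_left_cancel)
qed

lemma Tt_orbit:
  "Tt n a c = Tt n a (1 + a - c)
    \<and> Tt n a c = Tt n (c - a - of_nat n) c
    \<and> Tt n a c = Tt n (c - a - of_nat n) (1 - a - of_nat n)
    \<and> Tt n a c = Tt n (1 - c - of_nat n) (1 + a - c)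
    \<and> Tt n a c = Tt n (1 - c - of_nat n) (1 - a - of_nat n)"
proof -
  have "1 + (c - a - of_nat n) - c = 1 - a - of_nat n"
    and "1 + a - c - a - of_nat n = 1 - c - of_nat n"
    and "1 + (1 - c - of_nat n) - (1 + a - c) = 1 - a - of_nat n"
    by simp_all
  then have "Tt n (c - a - of_nat n) (1 - a - of_nat n) = Tt n (c - a - of_nat n) c"
    and "Tt n (1 - c - of_nat n) (1 + a - c) = Tt n a (1 + a - c)"
    and "Tt n (1 - c - of_nat n) (1 - a - of_nat n) = Tt n (1 - c - of_nat n) (1 + a - c)"
    using Tt_lower_param_swap[of n "c - a - of_nat n" c] Tt_transformation[of n "1 + a - c" a]
      Tt_lower_param_swap[of n "1 - c - of_nat n" "1 + a - c"]
    by (simp_all only:)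
  then show ?thesis
    by (simp only: Tt_lower_param_swap Tt_transformation)
qed

lemma Ut_permute:
  "Ut n x y z = Ut n x z y \<and> Ut n x y z = Ut n y x z \<and> Ut n x y z = Ut n y z x
    \<and> Ut n x y z = Ut n z x y \<and> Ut n x y z = Ut n z y x"
proof -
  define a where "a = (1 + 2*x - y - z - 2 * of_nat n) / 3"
  define c where "c = (2 + x + y - 2*z - of_nat n) / 3"
  have Ut_xyz: "Ut n x y z = Tt n a c"
    by (simp add: Ut_def a_def c_def)
  have Ut_perms: "Ut n x z y = Tt n a (1 + a - c)"
    "Ut n y x z = Tt n (c - a - of_nat n) c"
    "Ut n y z x = Tt n (c - a - of_nat n) (1 - a - of_nat n)"
    "Ut n z x y = Tt n (1 - c - of_nat n) (1 + a - c)"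
    "Ut n z y x = Tt n (1 - c - of_nat n) (1 - a - of_nat n)"
    unfolding Ut_def a_def c_def by (intro arg_cong2[where f = "Tt n"]; simp add: field_simps)+
  show ?thesis
    unfolding Ut_xyz Ut_perms by (rule Tt_orbit)
qed

definition lower_param :: "nat \<Rightarrow> nat \<Rightarrow> complex \<times> complex \<Rightarrow> complex" where
  "lower_param n i p =
     (if i = 1 then 1 + fst p - snd p else if i = 2 then snd p else 1 - fst p - of_nat n)"

definition permute_params :: "nat \<Rightarrow> (nat \<Rightarrow> nat) \<Rightarrow> complex \<times> complex \<Rightarrow> complex \<times> complex" where
  "permute_params n \<pi> p =
     (1 - of_nat n - lower_param n (Hilbert_Choice.inv \<pi> 3) p, lower_param n (Hilbert_Choice.inv \<pi> 2) p)"

lemma atLeastAtMost_1_3: "{1..3::nat} = {1, 2, 3}"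
  by auto

lemma sum_lower_param: "(\<Sum>i\<in>{1..3}. lower_param n i p) = 2 - of_nat n"
  unfolding atLeastAtMost_1_3 by (simp add: lower_param_def)

lemma lower_param_eqI:
  assumes "lower_param n 2 p = lower_param n 2 q" and "lower_param n 3 p = lower_param n 3 q"
  shows "p = q"
  using assms by (simp add: lower_param_def prod_eq_iff)

lemma lower_param_permute_params:
  assumes "\<pi> permutes {1..3}" and "i \<in> {1..3}"
  shows "lower_param n i (permute_params n \<pi> p) = lower_param n (Hilbert_Choice.inv \<pi> i) p"
proof -
  have last_two: "lower_param n j (permute_params n \<pi> p) = lower_param n (Hilbert_Choice.inv \<pi> j) p"
    if "j \<in> {2, 3}" for j
    using that by (auto simp: lower_param_def permute_params_def)
  have "(\<Sum>j\<in>{1..3}. lower_param n (Hilbert_Choice.inv \<pi> j) p) = (\<Sum>j\<in>{1..3}. lower_param n j p)"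
    using sum.permute[OF permutes_inv[OF assms(1)], of "\<lambda>j. lower_param n j p"] by (simp add: comp_def)
  also have "\<dots> = (\<Sum>j\<in>{1..3}. lower_param n j (permute_params n \<pi> p))"
    by (simp only: sum_lower_param)
  finally have "lower_param n 1 (permute_params n \<pi> p) = lower_param n (Hilbert_Choice.inv \<pi> 1) p"
    using last_two by (simp only: atLeastAtMost_1_3) simp
  moreover have "i \<in> {1, 2, 3}"
    using assms(2) by (simp only: atLeastAtMost_1_3)
  ultimately show ?thesis
    using last_two by blast
qed

lemma permute_params_compose:
  assumes "\<pi> permutes {1..3}" and "\<sigma> permutes {1..3}"
  shows "permute_params n (\<pi> \<circ> \<sigma>) = permute_params n \<pi> \<circ> permute_params n \<sigma>"
proof
  fix p
  have "Hilbert_Choice.inv (\<pi> \<circ> \<sigma>) = Hilbert_Choice.inv \<sigma> \<circ> Hilbert_Choice.inv \<pi>"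
    using assms by (simp add: o_inv_distrib permutes_bij)
  moreover have "Hilbert_Choice.inv \<pi> i \<in> {1..3}" if "i \<in> {1..3}" for i
    using that permutes_in_image[OF permutes_inv[OF assms(1)]] by simp
  moreover have "\<pi> \<circ> \<sigma> permutes {1..3}"
    using assms by (rule permutes_compose[rotated])
  ultimately have "lower_param n i (permute_params n (\<pi> \<circ> \<sigma>) p)
      = lower_param n i (permute_params n \<pi> (permute_params n \<sigma> p))" if "i \<in> {1..3}" for i
    using that assms by (simp add: lower_param_permute_params)
  then show "permute_params n (\<pi> \<circ> \<sigma>) p = (permute_params n \<pi> \<circ> permute_params n \<sigma>) p"
    by (intro lower_param_eqI[where n = n]) auto
qed

lemma permute_params_id: "permute_params n id = id"
  by (auto simp: permute_params_def lower_param_def)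

lemma bij_permute_params:
  assumes "\<pi> permutes {1..3}"
  shows "bij (permute_params n \<pi>)"
proof (rule o_bij)
  show "permute_params n (Hilbert_Choice.inv \<pi>) \<circ> permute_params n \<pi> = id"
    and "permute_params n \<pi> \<circ> permute_params n (Hilbert_Choice.inv \<pi>) = id"
    using assms permutes_inv[OF assms]
    by (simp_all add: permute_params_compose [symmetric] permutes_inv_o permute_params_id)
qed

lemma permute_params_hom: "permute_params n \<in> hom (sym_group 3) (BijGroup UNIV)"
  by (rule homI)
     (auto simp: sym_group_carrier sym_group_mult Bij_def BijGroup_def compose_def
        bij_permute_params permute_params_compose bij_is_inj bij_is_surj)

lemma lower_param_index_eq:
  assumes "i \<in> {1..3}" and "j \<in> {1..3}" and "\<And>p. lower_param n i p = lower_param n j p"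
  shows "i = j"
proof -
  have "lower_param n i (0, 1) - lower_param n i (0, 0) = lower_param n j (0, 1) - lower_param n j (0, 0)"
    using assms(3) by simp
  then show ?thesis
    using assms(1,2) unfolding atLeastAtMost_1_3 lower_param_def by auto
qed

lemma inj_on_permute_params: "inj_on (permute_params n) (carrier (sym_group 3))"
proof (rule inj_onI)
  fix \<pi> \<sigma>
  assume perms: "\<pi> \<in> carrier (sym_group 3)" "\<sigma> \<in> carrier (sym_group 3)"
    and eq: "permute_params n \<pi> = permute_params n \<sigma>"
  then have \<pi>: "\<pi> permutes {1..3}" and \<sigma>: "\<sigma> permutes {1..3}"
    by (simp_all add: sym_group_carrier)
  have same_params: "lower_param n (Hilbert_Choice.inv \<pi> i) p = lower_param n (Hilbert_Choice.inv \<sigma> i) p"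
    if "i \<in> {1..3}" for i p
    using lower_param_permute_params[OF \<pi> that, where n = n and p = p]
      lower_param_permute_params[OF \<sigma> that, where n = n and p = p] eq
    by simp
  have "Hilbert_Choice.inv \<pi> i = Hilbert_Choice.inv \<sigma> i" for i
  proof (cases "i \<in> {1..3}")
    case True
    then show ?thesis
      using permutes_in_image[OF permutes_inv[OF \<pi>]] permutes_in_image[OF permutes_inv[OF \<sigma>]]
        lower_param_index_eq[where n = n] same_params by blast
  next
    case False
    then show ?thesis
      using permutes_not_in[OF permutes_inv[OF \<pi>]] permutes_not_in[OF permutes_inv[OF \<sigma>]] by simp
  qed
  then show "\<pi> = \<sigma>"
    using permutes_inv_inv[OF \<pi>] permutes_inv_inv[OF \<sigma>] by (metis ext)
qed

lemma permute_params_transpose_1_2: "permute_params n (Transposition.transpose 1 2) = sig1"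
  by (auto simp: permute_params_def lower_param_def sig1_def Transposition.transpose_def)

lemma permute_params_transpose_1_3: "permute_params n (Transposition.transpose 1 3) = sig2 n"
  by (auto simp: permute_params_def lower_param_def sig2_def Transposition.transpose_def)

lemma sym_group_3_generate:
  "generate (sym_group 3) {Transposition.transpose 1 2, Transposition.transpose 1 3} = carrier (sym_group 3)"
  (is "generate _ ?T = _")
proof
  interpret group "sym_group 3"
    by (rule sym_group_is_group)
  have t12: "Transposition.transpose 1 2 \<in> generate (sym_group 3) ?T"
    and t13: "Transposition.transpose 1 3 \<in> generate (sym_group 3) ?T"
    by (auto intro: generate.incl)
  have "Transposition.transpose 2 1 \<circ> Transposition.transpose 1 3 \<circ> Transposition.transpose 2 1
      \<in> generate (sym_group 3) ?T"
    using generate.eng[OF generate.eng[OF t12 t13] t12] by (simp add: sym_group_mult transpose_commute)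
  then have t23: "Transposition.transpose 2 3 \<in> generate (sym_group 3) ?T"
    by (simp add: transpose_comp_triple)
  have swaps: "Transposition.transpose a b \<in> generate (sym_group 3) ?T"
    if "a \<in> {1..3}" "b \<in> {1..3}" "a \<noteq> b" for a b
    using that t12 t13 t23 unfolding atLeastAtMost_1_3 by (auto simp: transpose_commute)
  show "carrier (sym_group 3) \<subseteq> generate (sym_group 3) ?T"
  proof
    fix \<pi> assume "\<pi> \<in> carrier (sym_group 3)"
    then have "\<pi> permutes {1..3}"
      by (simp add: sym_group_carrier)
    from this finite_atLeastAtMost show "\<pi> \<in> generate (sym_group 3) ?T"
    proof (induction rule: permutes_induct)
      case id
      show ?case
        using generate.one[of "sym_group 3"] unfolding sym_group_one .
    next
      case (swap a b p)
      show ?case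
        using generate.eng[OF swaps[OF swap.hyps(1-3)] swap.IH] unfolding sym_group_mult .
    qed
  qed
  show "generate (sym_group 3) ?T \<subseteq> carrier (sym_group 3)"
    by (rule generate_incl) (auto simp: sym_group_carrier permutes_swap_id)
qed

lemma (in group_hom) iso_image:
  assumes "inj_on h (carrier G)"
  shows "G \<cong> H\<lparr>carrier := h ` carrier G\<rparr>"
  using assms by (intro is_isoI) (auto simp: iso_def hom_def bij_betw_def)

lemma sig_group_iso_sym_group_3:
  "BijGroup (UNIV :: (complex \<times> complex) set)
     \<lparr>carrier := generate (BijGroup UNIV) {sig1, sig2 n}\<rparr> \<cong> sym_group 3"
proof -
  interpret group_hom "sym_group 3" "BijGroup UNIV" "permute_params n"
    by (simp add: group_hom_def group_hom_axioms_def sym_group_is_group group_BijGroup permute_params_hom)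
  let ?T = "{Transposition.transpose 1 2, Transposition.transpose (1::nat) 3}"
  have "?T \<subseteq> carrier (sym_group 3)"
    by (auto simp: sym_group_carrier permutes_swap_id)
  then have "generate (BijGroup UNIV) (permute_params n ` ?T) = permute_params n ` generate (sym_group 3) ?T"
    by (rule generate_img)
  then have "generate (BijGroup UNIV) {sig1, sig2 n} = permute_params n ` carrier (sym_group 3)"
    by (simp only: sym_group_3_generate image_insert image_empty
        permute_params_transpose_1_2 permute_params_transpose_1_3)
  then show ?thesis
    using iso_image[OF inj_on_permute_params] by (simp add: G.iso_sym)
qed

theorem mainTheorem7:
  fixes n :: nat
  shows
   "(\<forall>a c. lower_ok (1 + a - c) \<and> lower_ok c \<and> lower_ok (1 - a - of_nat n) \<longrightarrow>
        F32 n (a/2) ((a+1)/2) (1 + a - c) c 4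
        = (-1) ^ n * pochhammer a n / pochhammer (1 + a - c) n
          * F32 n ((c - a - of_nat n)/2) ((c - a - of_nat n + 1)/2) (1 - a - of_nat n) c 4)
  \<and> (\<forall>a c. lower_ok (1 + a - c) \<and> lower_ok c \<longrightarrow>
        Tt n a c = pochhammer (1 + a - c) n * pochhammer c n * F32 n (a/2) ((a+1)/2) (1 + a - c) c 4)
  \<and> (\<forall>a c. Tt n a c = Tt n (c - a - of_nat n) c)
  \<and> (BijGroup (UNIV :: (complex \<times> complex) set))
       \<lparr>carrier := generate (BijGroup UNIV) {sig1, sig2 n}\<rparr> \<cong> sym_group 3
  \<and> (\<forall>a c. Tt n a c = Tt n a (1 + a - c)
         \<and> Tt n a c = Tt n (c - a - of_nat n) c
         \<and> Tt n a c = Tt n (c - a - of_nat n) (1 - a - of_nat n)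
         \<and> Tt n a c = Tt n (1 - c - of_nat n) (1 + a - c)
         \<and> Tt n a c = Tt n (1 - c - of_nat n) (1 - a - of_nat n))
  \<and> (\<forall>x y z. Ut n x y z = Ut n x z y \<and> Ut n x y z = Ut n y x z \<and> Ut n x y z = Ut n y z x
         \<and> Ut n x y z = Ut n z x y \<and> Ut n x y z = Ut n z y x)"
  using F32_transformation Tt_eq_F32 Tt_transformation[symmetric] sig_group_iso_sym_group_3
    Tt_orbit Ut_permute
  by blast

end
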